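(* Let $m \ge 2$, let $\varepsilon \le \frac{1}{2^{3m}\cdot 4m}$ be a power of 2, and let $\mathcal{G} = \{2^{-i}\varepsilon j : i \in \mathbb{Z},\ j \in \{1,\dots,2/\varepsilon^2 - 1\}\} \cap (0,1)$. Then for any $0 < q < 1$ there exists $z \in \mathcal{G}$ with $1.5\varepsilon q \le q - z \le 2\varepsilon z$. *)

theory Defs
  imports Complex_Main
begin

definition grid :: "real \<Rightarrow> real set" where
  "grid eps = {x. \<exists>(i::int) (j::nat). 1 \<le> real j \<and> real j \<le> 2 / eps\<^sup>2 - 1 \<and>
                   x = 2 powr (- real_of_int i) * eps * real j} \<inter> {0<..<1}"

end

theory Submission
  imports Defs
begin

(* Round a point of (0,1) down to the grid: choose the dyadic scale s = 2^(-i) with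
   q/8 < s <= q/4 and let z be the least multiple of s*eps that is at least q/(1 + 2 eps).
   Then q - z <= 2 eps z by construction, while z exceeds q/(1 + 2 eps) by at most
   s eps <= q eps/4, which keeps q - z >= 1.5 eps q once eps is small; and
   q/s < 8 bounds the multiplier by 8/eps + 1 <= 2/eps^2 - 1. *)

lemma dyadic_scale_exists:
  fixes x :: real
  assumes "0 < x"
  shows "\<exists>i::int. x / 2 < 2 powr (- real_of_int i) \<and> 2 powr (- real_of_int i) \<le> x"
proof (intro exI conjI)
  let ?k = "\<lfloor>log 2 x\<rfloor>"
  have "2 powr (- real_of_int (- ?k)) \<le> 2 powr (log 2 x)"
    by (intro powr_mono) auto
  then show "2 powr (- real_of_int (- ?k)) \<le> x"
    using assms by simp
  have "2 powr (log 2 x - 1) < 2 powr (- real_of_int (- ?k))"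
    by (intro powr_less_mono) linarith+
  then show "x / 2 < 2 powr (- real_of_int (- ?k))"
    using assms by (simp add: powr_diff)
qed

lemma round_up_to_multiple:
  fixes h t :: real
  assumes "0 < h" and "0 < t"
  shows "\<exists>j::nat. 1 \<le> j \<and> t \<le> h * real j \<and> h * real j < t + h"
proof (intro exI conjI)
  let ?j = "nat \<lceil>t / h\<rceil>"
  define x where "x = real ?j"
  have "0 < t / h"
    using assms by simp
  then have "t / h \<le> x" "x < t / h + 1"
    unfolding x_def by (simp_all add: of_nat_nat) linarith+
  with assms show "t \<le> h * real ?j" "h * real ?j < t + h"
    unfolding x_def[symmetric] by (simp_all add: field_simps)
  show "1 \<le> ?j"
    using \<open>0 < t / h\<close> by (simp add: le_nat_iff)
qed

lemma divide_one_plus_two_le: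
  fixes e q :: real
  assumes "0 \<le> e" "e \<le> 1/14" "0 \<le> q"
  shows "q / (1 + 2 * e) \<le> q * (1 - 7/4 * e)"
proof -
  have "0 \<le> e * (1/4 - 7/2 * e)"
    using assms by simp
  then have "1 \<le> (1 + 2 * e) * (1 - 7/4 * e)"
    by (simp add: algebra_simps)
  then have "q * 1 \<le> q * ((1 + 2 * e) * (1 - 7/4 * e))"
    using assms by (intro mult_left_mono) auto
  then show ?thesis
    using assms by (simp add: pos_divide_le_eq ac_simps)
qed

lemma multiplier_bound:
  fixes eps x :: real
  assumes "0 < eps" "eps \<le> 1/8" "eps * x < 8 + eps"
  shows "x \<le> 2 / eps\<^sup>2 - 1"
proof -
  have "eps\<^sup>2 * x = eps * (eps * x)"
    by (simp add: power2_eq_square)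
  also have "\<dots> \<le> eps * (8 + eps)"
    using assms by (intro mult_left_mono) auto
  also have "\<dots> = 8 * eps + eps\<^sup>2"
    by (simp add: power2_eq_square algebra_simps)
  finally have "eps\<^sup>2 * x \<le> 8 * eps + eps\<^sup>2" .
  moreover have "eps\<^sup>2 \<le> (1/8)\<^sup>2"
    using assms by (intro power_mono) auto
  ultimately have "eps\<^sup>2 * x \<le> 2 - eps\<^sup>2"
    using assms by (simp add: power2_eq_square)
  then show ?thesis
    using assms by (simp add: field_simps)
qed

lemma grid_approx_below:
  fixes eps q :: real
  assumes eps: "0 < eps" "eps \<le> 1/16"
    and q: "0 < q" "q < 1"
  shows "\<exists>z\<in>grid eps. 1.5 * eps * q \<le> q - z \<and> q - z \<le> 2 * eps * z"
proof -
  obtain i :: int where i: "q / 8 < 2 powr (- real_of_int i)" "2 powr (- real_of_int i) \<le> q / 4"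
    using dyadic_scale_exists[of "q / 4"] q by auto
  define s where "s = 2 powr (- real_of_int i)"
  have s: "q < 8 * s" "s \<le> q / 4"
    using i unfolding s_def by simp_all
  define t where "t = q / (1 + 2 * eps)"
  have "0 < s" "0 < s * eps" "0 < t"
    using eps q s unfolding t_def by (auto intro: mult_pos_pos)
  then obtain j :: nat where j: "1 \<le> j" "t \<le> s * eps * real j" "s * eps * real j < t + s * eps"
    using round_up_to_multiple by blast
  define z where "z = s * eps * real j"
  have "t \<le> q * (1 - 7/4 * eps)"
    using divide_one_plus_two_le[of eps q] eps q unfolding t_def by simp
  moreover have "s * eps \<le> q / 4 * eps"
    using s eps by simp
  ultimately have z_upper: "z \<le> q * (1 - 3/2 * eps)"
    using j(3) unfolding z_def by (simp add: algebra_simps)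
  have "eps * real j < 8 + eps"
  proof -
    have "t \<le> q"
      using eps q unfolding t_def by (simp add: divide_le_eq)
    then have "s * (eps * real j) < s * (8 + eps)"
      using j(3) s by (simp add: algebra_simps)
    then show ?thesis
      using \<open>0 < s\<close> by simp
  qed
  have j_upper: "real j \<le> 2 / eps\<^sup>2 - 1"
    using multiplier_bound[of eps "real j"] \<open>eps * real j < 8 + eps\<close> eps by simp
  have "q * (1 - 3/2 * eps) < q * 1"
    using q eps by (intro mult_strict_left_mono) auto
  then have "z < 1"
    using z_upper q by linarith
  moreover have "0 < z"
    using \<open>0 < s * eps\<close> j(1) unfolding z_def by simp
  ultimately have "z \<in> {0<..<1}"
    by simp
  then have "z \<in> grid eps"
    using j(1) j_upper unfolding grid_def z_def s_def by auto
  moreover have "1.5 * eps * q \<le> q - z"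
    using z_upper by (simp add: algebra_simps)
  moreover have "q - z \<le> 2 * eps * z"
    using j(2) eps unfolding t_def z_def by (simp add: field_simps)
  ultimately show ?thesis
    by blast
qed

theorem claim12:
  fixes m :: nat and eps q :: real
  assumes "m \<ge> 2"
    and "\<exists>k::int. eps = 2 powr (real_of_int k)"
    and "eps \<le> 1 / (2 ^ (3 * m) * (4 * real m))"
    and "0 < q" and "q < 1"
  shows "\<exists>z\<in>grid eps. 1.5 * eps * q \<le> q - z \<and> q - z \<le> 2 * eps * z"
proof (rule grid_approx_below)
  show "0 < eps"
    using assms(2) by auto
  have "(2::real) \<le> 2 ^ (3 * m)" "8 \<le> 4 * real m"
    using assms(1) by (simp_all add: self_le_power)
  then have "2 * 8 \<le> (2::real) ^ (3 * m) * (4 * real m)"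
    by (intro mult_mono) auto
  then show "eps \<le> 1/16"
    using assms(3) by (smt (verit) frac_le)
qed (use assms in auto)

end
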